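(* Let $0\le\alpha<1$ and let $v$ be a $C^\infty$ real function such that $v(\varphi)>0$ and $v'(\varphi)>0$ for all $\varphi$ larger than some $\varphi_0$, and such that $(\log\sqrt{v(\varphi)})'\to\alpha$ as $\varphi\to\infty$. Let $h_{\mathrm s}$ be the separatrix solution of $h'=\sqrt{h^2-v}$. Then $$h_{\mathrm s}(\varphi)\sim\frac{\sqrt{v(\varphi)}}{\sqrt{1-\alpha^2}},\qquad\varphi\to\infty.$$
   Context: Take $\varphi_0$ such that $(\log\sqrt v)'<1$ on $(\varphi_0,\infty)$. A solution of $h'=\sqrt{h^2-v}$ in $R_0=\{(\varphi,h):\varphi\ge\varphi_0,\ h>\sqrt{v(\varphi)}\}$ is of type A if it reaches the curve $h=\sqrt{v(\varphi)}$ at a finite $\varphi$, and of type B if it remains in $R_0$ for all $\varphi>\varphi_0$. For such $v$ both types occur, there is $r<\infty$ such that solutions with $h(\varphi_0)<r$ are of type A and those with $h(\varphi_0)>r$ are of type B, and the separatrix $h_{\mathrm s}$ is the solution with $h_{\mathrm s}(\varphi_0)=r$; it is defined for all $\varphi\ge\varphi_0$ and $h_{\mathrm s}/\sqrt v$ is bounded there. *)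

theory Defs
  imports "HOL-Analysis.Analysis" "HOL-Library.Landau_Symbols"
begin

definition typeB_solution :: "(real \<Rightarrow> real) \<Rightarrow> real \<Rightarrow> (real \<Rightarrow> real) \<Rightarrow> bool" where
  "typeB_solution v a h \<longleftrightarrow>
     (\<forall>\<phi>\<ge>a. h \<phi> > sqrt (v \<phi>) \<and>
        (h has_real_derivative sqrt ((h \<phi>)\<^sup>2 - v \<phi>)) (at \<phi> within {a..}))"

text \<open>The separatrix: the solution whose initial value at a is the threshold
  r = inf of initial values of type-B solutions (r separates type A from type B).\<close>
definition separatrix :: "(real \<Rightarrow> real) \<Rightarrow> real \<Rightarrow> (real \<Rightarrow> real) \<Rightarrow> bool" where
  "separatrix v a h \<longleftrightarrow>
     typeB_solution v a h \<and> h a = Inf {g a | g. typeB_solution v a g}"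

end

theory Submission
  imports Defs
begin

text \<open>Write \<open>u = sqrt v\<close> and \<open>e = (ln u)'\<close>. For a solution \<open>g > u\<close> of
  \<open>g' = sqrt (g\<^sup>2 - v)\<close> the ratio \<open>y = g / u\<close> solves \<open>y' = sqrt (y\<^sup>2 - 1) - e * y\<close>. Since
  \<open>e\<close> tends to \<open>\<alpha>\<close>, the right-hand side is eventually negative below any level
  \<open>a < y_star = 1 / sqrt (1 - \<alpha>\<^sup>2)\<close> and positive above any level \<open>a > y_star\<close>.
  Below \<open>a < y_star\<close> the ratio of the separatrix would decrease at a fixed rate until it drops
  below \<open>1\<close>, impossible for a type-B solution. If it ever exceeded a level \<open>a > y_star\<close>, a
  solution started slightly below \<open>h\<close> would stay close to \<open>h\<close> up to that time (Gronwall),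
  exceed the level as well and hence be of type B, contradicting the minimality of \<open>h \<phi>\<^sub>0\<close>.
  Such comparison solutions come from a Picard iteration for the field truncated below
  \<open>c * u\<close>, \<open>c > 1\<close>, which is globally Lipschitz.\<close>

lemma continuous_on_integral_upto_max:
  fixes f :: "real \<Rightarrow> real"
  assumes "continuous_on UNIV f"
  shows "continuous_on UNIV (\<lambda>t. integral {p..max t p} f)"
proof -
  have "continuous (at t) (\<lambda>t. integral {p..max t p} f)" for t
  proof -
    define b where "b = max t p + 1"
    have c1: "continuous_on {p..b} (\<lambda>x. integral {p..x} f)"
      by (rule indefinite_integral_continuous_1)
         (rule integrable_continuous_real, rule continuous_on_subset[OF assms], simp)
    have c2: "continuous_on {..<b} (\<lambda>t. max t p)" by (intro continuous_intros)
    have "continuous_on {..<b} (\<lambda>t. integral {p..max t p} f)"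
      using continuous_on_compose2[OF c1 c2] b_def by (force simp: max_def)
    then show ?thesis by (rule continuous_on_interior) (auto simp: b_def interior_open)
  qed
  then show ?thesis by (simp add: continuous_at_imp_continuous_on)
qed

lemma abs_integral_le_exp:
  fixes f :: "real \<Rightarrow> real"
  assumes K: "K > 0" and pq: "p \<le> q" and cont: "continuous_on {p..q} f"
    and bound: "\<And>s. s \<in> {p..q} \<Longrightarrow> \<bar>f s\<bar> \<le> C * exp (K * (s - p))"
  shows "\<bar>integral {p..q} f\<bar> \<le> C * exp (K * (q - p)) / K"
proof -
  have "((\<lambda>s. C / K * exp (K * (s - p))) has_vector_derivative C * exp (K * (s - p)))
      (at s within {p..q})" for s
    using K by (auto intro!: derivative_eq_intros
        simp: has_real_derivative_iff_has_vector_derivative[symmetric])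
  then have int: "((\<lambda>s. C * exp (K * (s - p))) has_integral
      (C / K * exp (K * (q - p)) - C / K * exp (K * (p - p)))) {p..q}"
    by (intro fundamental_theorem_of_calculus[OF pq]) auto
  have "\<bar>integral {p..q} f\<bar> \<le> integral {p..q} (\<lambda>s. C * exp (K * (s - p)))"
    using integral_norm_bound_integral[of f "{p..q}" "\<lambda>s. C * exp (K * (s - p))"] bound
      integrable_continuous_real[OF cont] int by (auto simp: has_integral_integrable)
  also have "\<dots> = C / K * exp (K * (q - p)) - C / K" using integral_unique[OF int] by simp
  also have "\<dots> \<le> C * exp (K * (q - p)) / K"
  proof -
    have "\<bar>f p\<bar> \<le> C" using bound[of p] pq by simp
    then have "C \<ge> 0" by linarith
    then show ?thesis using K by (simp add: divide_nonneg_pos)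
  qed
  finally show ?thesis .
qed

text \<open>Global existence for \<open>x' = F t x\<close> on \<open>[p, \<infinity>)\<close> by Bielecki's trick: writing
  \<open>x = weight * w\<close>, the Picard operator is a contraction with constant \<open>L / rate < 1\<close>
  in the sup norm of the bounded continuous function \<open>w\<close>.\<close>

locale lipschitz_ode =
  fixes F :: "real \<Rightarrow> real \<Rightarrow> real" and p L M K0 :: real
  assumes continuous_F: "continuous_on UNIV (\<lambda>z. F (fst z) (snd z))"
    and lipschitz_F: "\<And>t x y. t \<ge> p \<Longrightarrow> \<bar>F t x - F t y\<bar> \<le> L * \<bar>x - y\<bar>"
    and L_nonneg: "L \<ge> 0" and K0_nonneg: "K0 \<ge> 0"
    and growth_F: "\<And>t. t \<ge> p \<Longrightarrow> \<bar>F t 0\<bar> \<le> M * exp (K0 * (t - p))"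
begin

definition rate :: real where "rate = K0 + L + 1"

definition weight :: "real \<Rightarrow> real" where "weight s = exp (rate * (s - p))"

definition picard :: "real \<Rightarrow> (real \<Rightarrow> real) \<Rightarrow> real \<Rightarrow> real" where
  "picard \<xi> w t = (\<xi> + integral {p..max t p} (\<lambda>s. F s (weight s * w s))) / weight (max t p)"

lemma rate_pos: "rate > 0"
  using L_nonneg K0_nonneg by (simp add: rate_def)

lemma weight_pos: "weight s > 0"
  by (simp add: weight_def)

lemma weight_nonzero [simp]: "weight s \<noteq> 0"
  using weight_pos[of s] by simp

lemma weight_ge_1: "s \<ge> p \<Longrightarrow> weight s \<ge> 1"
  using rate_pos by (simp add: weight_def)

lemma continuous_on_weighted_F:
  assumes "continuous_on UNIV w"
  shows "continuous_on UNIV (\<lambda>s. F s (weight s * w s))"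
proof -
  have "continuous_on UNIV (\<lambda>s. (s, weight s * w s))"
    using assms unfolding weight_def by (intro continuous_intros) auto
  from continuous_on_compose2[OF continuous_F this] show ?thesis by simp
qed

lemma continuous_on_picard:
  assumes "continuous_on UNIV w"
  shows "continuous_on UNIV (picard \<xi> w)"
proof -
  have "continuous_on UNIV (\<lambda>t. weight (max t p))"
    unfolding weight_def by (intro continuous_intros)
  then show ?thesis
    unfolding picard_def
    using continuous_on_integral_upto_max[OF continuous_on_weighted_F[OF assms], of p]
    by (intro continuous_intros) auto
qed

lemma abs_weighted_F_le:
  assumes "\<And>s. \<bar>w s\<bar> \<le> B" "s \<ge> p"
  shows "\<bar>F s (weight s * w s)\<bar> \<le> (M + L * B) * weight s"
proof -
  have M: "M \<ge> 0" using growth_F[of p] by simp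
  have "exp (K0 * (s - p)) \<le> weight s"
    unfolding weight_def rate_def using assms(2) L_nonneg by (intro exp_mono mult_right_mono) auto
  then have "M * exp (K0 * (s - p)) \<le> M * weight s" by (rule mult_left_mono[OF _ M])
  then have "\<bar>F s 0\<bar> \<le> M * weight s" using growth_F[OF assms(2)] by linarith
  moreover have "\<bar>weight s * w s\<bar> \<le> weight s * B"
    using assms(1)[of s] weight_pos[of s] by (simp add: abs_mult)
  then have "L * \<bar>weight s * w s\<bar> \<le> L * (weight s * B)" by (rule mult_left_mono[OF _ L_nonneg])
  moreover have "\<bar>F s (weight s * w s)\<bar> \<le> \<bar>F s 0\<bar> + L * \<bar>weight s * w s\<bar>"
    using lipschitz_F[OF assms(2), of "weight s * w s" 0] by simp
  ultimately have "\<bar>F s (weight s * w s)\<bar> \<le> M * weight s + L * (weight s * B)" by linarith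
  then show ?thesis by (simp add: algebra_simps)
qed

lemma abs_picard_le:
  assumes "\<And>s. \<bar>w s\<bar> \<le> B" "continuous_on UNIV w"
  shows "\<bar>picard \<xi> w t\<bar> \<le> \<bar>\<xi>\<bar> + (M + L * B) / rate"
proof -
  let ?q = "max t p"
  have "\<bar>integral {p..?q} (\<lambda>s. F s (weight s * w s))\<bar> \<le> (M + L * B) * exp (rate * (?q - p)) / rate"
  proof (rule abs_integral_le_exp[OF rate_pos])
    show "continuous_on {p..?q} (\<lambda>s. F s (weight s * w s))"
      using continuous_on_weighted_F[OF assms(2)] by (rule continuous_on_subset) simp
    show "\<bar>F s (weight s * w s)\<bar> \<le> (M + L * B) * exp (rate * (s - p))" if "s \<in> {p..?q}" for s
      using abs_weighted_F_le[OF assms(1), of s] that by (simp add: weight_def)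
  qed simp
  then have int: "\<bar>integral {p..?q} (\<lambda>s. F s (weight s * w s))\<bar> \<le> (M + L * B) * weight ?q / rate"
    by (simp add: weight_def)
  have "\<bar>\<xi>\<bar> / weight ?q \<le> \<bar>\<xi>\<bar>"
    using weight_ge_1[of ?q] by (simp add: divide_le_eq mult_le_cancel_left1)
  moreover have "\<bar>integral {p..?q} (\<lambda>s. F s (weight s * w s))\<bar> / weight ?q \<le> (M + L * B) / rate"
    using int weight_pos[of ?q] rate_pos by (simp add: divide_le_eq field_simps)
  moreover have "\<bar>picard \<xi> w t\<bar>
      \<le> \<bar>\<xi>\<bar> / weight ?q + \<bar>integral {p..?q} (\<lambda>s. F s (weight s * w s))\<bar> / weight ?q"
    unfolding picard_def using weight_pos[of ?q]
    by (simp add: abs_div add_divide_distrib[symmetric] divide_right_mono abs_triangle_ineq)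
  ultimately show ?thesis by linarith
qed

lemma abs_picard_diff_le:
  assumes "continuous_on UNIV w1" "continuous_on UNIV w2" "\<And>s. \<bar>w1 s - w2 s\<bar> \<le> D"
  shows "\<bar>picard \<xi> w1 t - picard \<xi> w2 t\<bar> \<le> L / rate * D"
proof -
  let ?q = "max t p"
  let ?G1 = "\<lambda>s. F s (weight s * w1 s)" and ?G2 = "\<lambda>s. F s (weight s * w2 s)"
  have cont: "continuous_on {p..?q} ?G1" "continuous_on {p..?q} ?G2"
    using continuous_on_subset[OF continuous_on_weighted_F] assms(1,2) by auto
  have "\<bar>?G1 s - ?G2 s\<bar> \<le> (L * D) * weight s" if "s \<in> {p..?q}" for s
  proof -
    have "\<bar>?G1 s - ?G2 s\<bar> \<le> L * \<bar>weight s * w1 s - weight s * w2 s\<bar>"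
      using lipschitz_F[of s] that by simp
    also have "\<dots> = L * (weight s * \<bar>w1 s - w2 s\<bar>)"
      using weight_pos[of s] by (simp add: abs_mult right_diff_distrib[symmetric])
    also have "\<dots> \<le> L * (weight s * D)"
      using assms(3)[of s] weight_pos[of s] L_nonneg by (intro mult_left_mono) auto
    finally show ?thesis by (simp add: algebra_simps)
  qed
  then have "\<bar>integral {p..?q} (\<lambda>s. ?G1 s - ?G2 s)\<bar> \<le> (L * D) * exp (rate * (?q - p)) / rate"
    using cont by (intro abs_integral_le_exp[OF rate_pos]) (auto intro!: continuous_intros simp: weight_def)
  then have int: "\<bar>integral {p..?q} (\<lambda>s. ?G1 s - ?G2 s)\<bar> \<le> (L * D) * weight ?q / rate"
    by (simp add: weight_def)
  have "integral {p..?q} (\<lambda>s. ?G1 s - ?G2 s) = integral {p..?q} ?G1 - integral {p..?q} ?G2"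
    by (rule integral_diff) (use cont integrable_continuous_real in auto)
  then have "\<bar>picard \<xi> w1 t - picard \<xi> w2 t\<bar>
      = \<bar>integral {p..?q} (\<lambda>s. ?G1 s - ?G2 s)\<bar> / weight ?q"
    unfolding picard_def using weight_pos[of ?q] by (simp add: diff_divide_distrib[symmetric] abs_div)
  also have "\<dots> \<le> L / rate * D"
    using int weight_pos[of ?q] rate_pos by (simp add: divide_le_eq field_simps)
  finally show ?thesis .
qed

lemma picard_fixpoint_solves:
  assumes cont: "continuous_on UNIV w" and fixed: "\<And>t. picard \<xi> w t = w t"
  defines "x \<equiv> \<lambda>t. weight t * w t"
  shows "x p = \<xi>" and "t \<ge> p \<Longrightarrow> (x has_real_derivative F t (x t)) (at t within {p..})"
proof -
  let ?G = "\<lambda>s. F s (x s)"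
  have x_eq: "x t = \<xi> + integral {p..t} ?G" if "t \<ge> p" for t
    using fixed[of t] that unfolding x_def picard_def by (simp add: max_def field_simps)
  then show "x p = \<xi>" by simp
  assume t: "t \<ge> p"
  have "((\<lambda>y. integral {p..y} ?G) has_real_derivative ?G t) (at t within {p..t+1})"
    using continuous_on_subset[OF continuous_on_weighted_F[OF cont]] t
    by (intro integral_has_real_derivative) (auto simp: x_def)
  moreover have "at t within {p..t+1} = at t within {p..}"
    by (rule at_within_nhd[of _ "{..<t+1}"]) auto
  ultimately have "((\<lambda>y. \<xi> + integral {p..y} ?G) has_real_derivative ?G t) (at t within {p..})"
    by (auto intro!: derivative_eq_intros)
  then show "(x has_real_derivative F t (x t)) (at t within {p..})"
    by (rule has_field_derivative_transform_within[of _ _ _ _ 1]) (use t x_eq in auto)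
qed

theorem solution_exists:
  "\<exists>x. x p = \<xi> \<and> (\<forall>t\<ge>p. (x has_real_derivative F t (x t)) (at t within {p..}))"
proof -
  have picard_bcontfun: "picard \<xi> (apply_bcontfun w) \<in> bcontfun" for w
  proof -
    obtain B where "\<And>s. \<bar>apply_bcontfun w s\<bar> \<le> B"
      using norm_bounded[of w] by (metis real_norm_def)
    then show ?thesis
      using abs_picard_le[of "apply_bcontfun w" B]
      by (intro bcontfun_normI[of _ "\<bar>\<xi>\<bar> + (M + L * B) / rate"] continuous_on_picard) auto
  qed
  define P where "P w = Bcontfun (picard \<xi> (apply_bcontfun w))" for w
  have P_apply: "apply_bcontfun (P w) = picard \<xi> (apply_bcontfun w)" for w
    unfolding P_def using picard_bcontfun[of w] by (simp add: Bcontfun_inverse)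
  have "dist (P w1) (P w2) \<le> L / rate * dist w1 w2" for w1 w2
    using abs_picard_diff_le[of "apply_bcontfun w1" "apply_bcontfun w2" "dist w1 w2"]
      dist_bounded[of w1 _ w2]
    by (intro dist_bound) (auto simp: P_apply dist_real_def)
  moreover have "L / rate < 1" using rate_pos K0_nonneg L_nonneg by (simp add: rate_def)
  ultimately obtain w where "P w = w"
    using banach_fix_type[of "L / rate" P] L_nonneg rate_pos by auto
  then have "picard \<xi> (apply_bcontfun w) t = apply_bcontfun w t" for t by (metis P_apply)
  from picard_fixpoint_solves[OF _ this] show ?thesis by auto
qed

end

lemma sqrt_sq_minus_one_minus_mult_mono:
  fixes y a c :: real
  assumes "1 \<le> y" "y \<le> a" "c \<le> 1"
  shows "sqrt (y\<^sup>2 - 1) - c * y \<le> sqrt (a\<^sup>2 - 1) - c * a"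
proof -
  define A where "A = sqrt (a\<^sup>2 - 1)"
  define Y where "Y = sqrt (y\<^sup>2 - 1)"
  have "A \<le> sqrt (a\<^sup>2)" "Y \<le> sqrt (y\<^sup>2)" unfolding A_def Y_def by (rule real_sqrt_le_mono, simp)+
  then have AY: "A\<^sup>2 = a\<^sup>2 - 1" "Y\<^sup>2 = y\<^sup>2 - 1" "0 \<le> A" "0 \<le> Y" "A \<le> a" "Y \<le> y"
    using assms by (auto simp: A_def Y_def real_sqrt_le_iff)
  have "a - y \<le> A - Y"
  proof (cases "A + Y = 0")
    case True
    then have "A = 0" "Y = 0" using AY by auto
    then have "a\<^sup>2 = 1" "y\<^sup>2 = 1" using AY by auto
    then show ?thesis using assms AY True by (auto simp: power2_eq_1_iff)
  next
    case False
    have "(a - y) * (A + Y) \<le> (a - y) * (a + y)"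
      using AY assms by (intro mult_left_mono) auto
    also have "\<dots> = (A - Y) * (A + Y)" using AY by (simp add: algebra_simps power2_eq_square)
    finally show ?thesis using False AY by (simp add: mult_le_cancel_right)
  qed
  moreover have "0 \<le> (1 - c) * (a - y)" using assms by simp
  then have "c * (a - y) \<le> a - y" by (simp add: algebra_simps)
  ultimately show ?thesis by (simp add: A_def Y_def algebra_simps)
qed

lemma sqrt_sq_minus_one_less_mult:
  fixes \<alpha> a :: real
  assumes "0 \<le> \<alpha>" "\<alpha> < 1" "1 \<le> a" "a < 1 / sqrt (1 - \<alpha>\<^sup>2)"
  shows "sqrt (a\<^sup>2 - 1) < \<alpha> * a"
proof -
  have \<alpha>: "0 < 1 - \<alpha>\<^sup>2" using assms(1,2) by (simp add: abs_square_less_1)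
  then have "a * sqrt (1 - \<alpha>\<^sup>2) < 1" using assms(4) by (simp add: pos_less_divide_eq)
  then have "(a * sqrt (1 - \<alpha>\<^sup>2))\<^sup>2 < 1\<^sup>2"
    using assms(3) \<alpha> by (intro power_strict_mono) auto
  then have "a\<^sup>2 - 1 < (\<alpha> * a)\<^sup>2" using \<alpha> by (simp add: power_mult_distrib algebra_simps)
  then have "sqrt (a\<^sup>2 - 1) < sqrt ((\<alpha> * a)\<^sup>2)" by (rule real_sqrt_less_mono)
  then show ?thesis using assms by simp
qed

lemma mult_less_sqrt_sq_minus_one:
  fixes \<alpha> a :: real
  assumes "0 \<le> \<alpha>" "\<alpha> < 1" "1 / sqrt (1 - \<alpha>\<^sup>2) < a"
  shows "\<alpha> * a < sqrt (a\<^sup>2 - 1)"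
proof -
  have \<alpha>: "0 < 1 - \<alpha>\<^sup>2" "1 - \<alpha>\<^sup>2 \<le> 1" using assms(1,2) by (simp_all add: abs_square_less_1)
  then have "1 < a * sqrt (1 - \<alpha>\<^sup>2)" using assms(3) by (simp add: pos_divide_less_eq)
  then have "1\<^sup>2 < (a * sqrt (1 - \<alpha>\<^sup>2))\<^sup>2" by (intro power_strict_mono) auto
  then have "(\<alpha> * a)\<^sup>2 < a\<^sup>2 - 1" using \<alpha> by (simp add: power_mult_distrib algebra_simps)
  moreover have "0 < 1 / sqrt (1 - \<alpha>\<^sup>2)" using \<alpha> by simp
  then have "0 \<le> a" using assms(3) by linarith
  moreover have "sqrt ((\<alpha> * a)\<^sup>2) < sqrt (a\<^sup>2 - 1)" using calculation(1) by (rule real_sqrt_less_mono)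
  ultimately show ?thesis using assms(1) by simp
qed

lemma le_mult_sqrt_sq_minus:
  fixes c v z :: real
  assumes c: "c > 1" and z: "0 \<le> z" "c\<^sup>2 * v \<le> z\<^sup>2"
  shows "z \<le> c / sqrt (c\<^sup>2 - 1) * sqrt (z\<^sup>2 - v)"
proof -
  have c2: "c\<^sup>2 > 1" using c by (simp add: one_less_power)
  have "z\<^sup>2 * (c\<^sup>2 - 1) \<le> c\<^sup>2 * (z\<^sup>2 - v)" using z(2) by (simp add: algebra_simps)
  then have "sqrt (z\<^sup>2 * (c\<^sup>2 - 1)) \<le> sqrt (c\<^sup>2 * (z\<^sup>2 - v))" by (rule real_sqrt_le_mono)
  then have "z * sqrt (c\<^sup>2 - 1) \<le> c * sqrt (z\<^sup>2 - v)" using z c by (simp add: real_sqrt_mult)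
  then show ?thesis using c2 by (simp add: field_simps)
qed

lemma abs_sqrt_sq_minus_diff_le:
  fixes c v x y :: real
  assumes c: "c > 1" and v: "0 \<le> v"
    and x: "0 \<le> x" "c\<^sup>2 * v \<le> x\<^sup>2" and y: "0 \<le> y" "c\<^sup>2 * v \<le> y\<^sup>2"
  shows "\<bar>sqrt (x\<^sup>2 - v) - sqrt (y\<^sup>2 - v)\<bar> \<le> c / sqrt (c\<^sup>2 - 1) * \<bar>x - y\<bar>"
proof -
  define L where "L = c / sqrt (c\<^sup>2 - 1)"
  define X where "X = sqrt (x\<^sup>2 - v)"
  define Y where "Y = sqrt (y\<^sup>2 - v)"
  have "1 \<le> c\<^sup>2" using c by (simp add: one_le_power)
  then have "1 * v \<le> c\<^sup>2 * v" using v by (rule mult_right_mono)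
  then have XY: "X\<^sup>2 = x\<^sup>2 - v" "Y\<^sup>2 = y\<^sup>2 - v" "0 \<le> X" "0 \<le> Y"
    using x y by (simp_all add: X_def Y_def)
  have bounds: "x \<le> L * X" "y \<le> L * Y"
    using le_mult_sqrt_sq_minus[OF c x] le_mult_sqrt_sq_minus[OF c y] by (simp_all add: L_def X_def Y_def)
  show ?thesis
  proof (cases "X + Y = 0")
    case True
    then have "X = 0" "Y = 0" using XY by auto
    then have "x = 0" "y = 0" using bounds x y by auto
    then show ?thesis by simp
  next
    case False
    then have pos: "X + Y > 0" using XY by simp
    have "(X - Y) * (X + Y) = (x - y) * (x + y)"
      using XY by (simp add: algebra_simps power2_eq_square)
    then have "\<bar>X - Y\<bar> * (X + Y) = \<bar>x - y\<bar> * (x + y)"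
      using XY x y by (metis abs_mult abs_of_nonneg add_nonneg_nonneg)
    also have "\<dots> \<le> \<bar>x - y\<bar> * (L * (X + Y))" using bounds by (intro mult_left_mono) (auto simp: algebra_simps)
    finally have "\<bar>X - Y\<bar> * (X + Y) \<le> (L * \<bar>x - y\<bar>) * (X + Y)" by (simp add: algebra_simps)
    then have "\<bar>X - Y\<bar> \<le> L * \<bar>x - y\<bar>" using pos by (simp only: mult_le_cancel_right_pos)
    then show ?thesis by (simp add: L_def X_def Y_def)
  qed
qed

lemma stays_le_if_deriv_neg:
  fixes y y' :: "real \<Rightarrow> real"
  assumes deriv: "\<And>s. s \<ge> p \<Longrightarrow> (y has_real_derivative y' s) (at s)"
    and neg: "\<And>s. s \<ge> p \<Longrightarrow> y s \<le> a \<Longrightarrow> y' s < 0"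
    and "y p \<le> a" "p \<le> t"
  shows "y t \<le> a"
proof (rule ccontr)
  assume "\<not> y t \<le> a"
  define S where "S = {p..t} \<inter> y -` {..a}"
  have "continuous_on {p..t} y"
    by (rule continuous_at_imp_continuous_on) (metis deriv DERIV_isCont atLeastAtMost_iff)
  then have "closed S" unfolding S_def by (rule continuous_closed_preimage) auto
  moreover have "p \<in> S" "bdd_above S" using assms(3,4) by (auto simp: S_def bdd_above_def)
  ultimately have "Sup S \<in> S" by (auto intro: closed_contains_Sup)
  then have s: "p \<le> Sup S" "Sup S < t" "y (Sup S) \<le> a"
    using \<open>\<not> y t \<le> a\<close> by (auto simp: S_def order.order_iff_strict)
  obtain d where d: "d > 0" "\<And>h. h > 0 \<Longrightarrow> h < d \<Longrightarrow> y (Sup S + h) < y (Sup S)"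
    using DERIV_neg_dec_right[OF deriv[OF s(1)] neg[OF s(1,3)]] by blast
  define h where "h = min (d / 2) ((t - Sup S) / 2)"
  have h: "h > 0" "h < d" "Sup S + h \<le> t" using d s by (simp_all add: h_def min_def field_simps)
  then have "Sup S + h \<in> S" using d(2)[OF h(1,2)] s by (auto simp: S_def)
  then have "Sup S + h \<le> Sup S" using \<open>bdd_above S\<close> by (rule cSup_upper)
  then show False using h by simp
qed

lemma stays_ge_if_deriv_pos:
  fixes y y' :: "real \<Rightarrow> real"
  assumes deriv: "\<And>s. s \<ge> p \<Longrightarrow> (y has_real_derivative y' s) (at s)"
    and pos: "\<And>s. s \<ge> p \<Longrightarrow> y s \<ge> a \<Longrightarrow> y' s > 0"
    and "a \<le> y p" "p \<le> t"
  shows "a \<le> y t"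
proof -
  have "- y t \<le> - a"
    by (rule stays_le_if_deriv_neg[of p "\<lambda>s. - y s" "\<lambda>s. - y' s"])
      (use assms in \<open>auto intro!: derivative_eq_intros\<close>)
  then show ?thesis by simp
qed

lemma le_linear_decrease_if_deriv_le:
  fixes y y' :: "real \<Rightarrow> real"
  assumes c: "c > 0"
    and deriv: "\<And>s. s \<ge> t \<Longrightarrow> (y has_real_derivative y' s) (at s)"
    and slope: "\<And>s. s \<ge> t \<Longrightarrow> y s \<le> a \<Longrightarrow> y' s \<le> - c"
    and "y t \<le> a" "t \<le> s"
  shows "y s \<le> y t - c * (s - t)"
proof -
  have below: "y r \<le> a" if "t \<le> r" for r
  proof (rule stays_le_if_deriv_neg[of t y y'])
    show "y' s < 0" if "s \<ge> t" "y s \<le> a" for s using slope[OF that] c by linarith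
  qed (use deriv assms(4) that in auto)
  have "y s + c * s \<le> y t + c * t"
  proof (rule DERIV_nonpos_imp_nonincreasing[OF \<open>t \<le> s\<close>])
    fix r assume r: "t \<le> r"
    have "((\<lambda>s. y s + c * s) has_real_derivative y' r + c) (at r)"
      using deriv[OF r] by (auto intro!: derivative_eq_intros)
    moreover have "y' r + c \<le> 0" using slope[OF r below[OF r]] by simp
    ultimately show "\<exists>d. ((\<lambda>s. y s + c * s) has_real_derivative d) (at r) \<and> d \<le> 0" by blast
  qed
  then show ?thesis by (simp add: algebra_simps)
qed

lemma abs_diff_solutions_le_exp:
  fixes x y :: "real \<Rightarrow> real" and F :: "real \<Rightarrow> real \<Rightarrow> real"
  assumes "p \<le> t" and L: "L \<ge> 0"
    and cont: "continuous_on {p..t} x" "continuous_on {p..t} y"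
    and dx: "\<And>s. p < s \<Longrightarrow> s < t \<Longrightarrow> (x has_real_derivative F s (x s)) (at s)"
    and dy: "\<And>s. p < s \<Longrightarrow> s < t \<Longrightarrow> (y has_real_derivative F s (y s)) (at s)"
    and lip: "\<And>s. p < s \<Longrightarrow> s < t \<Longrightarrow> \<bar>F s (x s) - F s (y s)\<bar> \<le> L * \<bar>x s - y s\<bar>"
  shows "\<bar>x t - y t\<bar> \<le> \<bar>x p - y p\<bar> * exp (L * (t - p))"
proof -
  define D where "D s = (x s - y s)\<^sup>2 * exp (- (2 * L) * (s - p))" for s
  have D_eq: "D s = (\<bar>x s - y s\<bar> * exp (- L * (s - p)))\<^sup>2" for s
    by (simp add: D_def power_mult_distrib exp_double[symmetric] mult_exp_exp algebra_simps)
  have "- D p \<le> - D t"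
  proof (rule DERIV_nonneg_imp_increasing_open[OF \<open>p \<le> t\<close>])
    show "continuous_on {p..t} (\<lambda>s. - D s)"
      unfolding D_def using cont by (intro continuous_intros)
    fix s assume s: "p < s" "s < t"
    define d where "d = x s - y s"
    define dF where "dF = F s (x s) - F s (y s)"
    define E where "E = exp (- (2 * L) * (s - p))"
    have "((\<lambda>s. - D s) has_real_derivative - (2 * d * dF * E + d\<^sup>2 * (- (2 * L) * E))) (at s)"
      unfolding D_def d_def dF_def E_def
      by (rule derivative_eq_intros dx[OF s] dy[OF s] refl | simp)+
    moreover have "d * dF \<le> L * d\<^sup>2"
    proof -
      have "d * dF \<le> \<bar>d\<bar> * \<bar>dF\<bar>" by (simp add: abs_mult[symmetric])
      also have "\<dots> \<le> \<bar>d\<bar> * (L * \<bar>d\<bar>)" using lip[OF s] by (intro mult_left_mono) (auto simp: d_def dF_def)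
      finally show ?thesis by (simp add: power2_eq_square algebra_simps)
    qed
    then have "0 \<le> (L * d\<^sup>2 - d * dF) * (2 * E)" by (simp add: E_def)
    then have "0 \<le> - (2 * d * dF * E + d\<^sup>2 * (- (2 * L) * E))" by (simp add: algebra_simps)
    ultimately show "\<exists>y. ((\<lambda>s. - D s) has_real_derivative y) (at s) \<and> 0 \<le> y" by blast
  qed
  then have "(\<bar>x t - y t\<bar> * exp (- L * (t - p)))\<^sup>2 \<le> \<bar>x p - y p\<bar>\<^sup>2"
    by (simp add: D_eq)
  then have "\<bar>x t - y t\<bar> * exp (- L * (t - p)) \<le> \<bar>x p - y p\<bar>"
    by (rule power2_le_imp_le) simp
  then have "\<bar>x t - y t\<bar> * exp (- L * (t - p)) * exp (L * (t - p)) \<le> \<bar>x p - y p\<bar> * exp (L * (t - p))"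
    by (rule mult_right_mono) simp
  then show ?thesis by (simp add: mult.assoc flip: exp_add)
qed

lemma has_real_derivative_at_if_within_atLeast:
  assumes "p < t" "(f has_real_derivative D) (at t within {p..})"
  shows "(f has_real_derivative D) (at t)"
proof -
  have "at t within {p..} = at t"
    using assms(1) by (intro at_within_interior) (simp add: interior_real_atLeast)
  then show ?thesis using assms(2) by simp
qed

lemma continuous_on_if_has_real_derivative_within_atLeast:
  assumes "\<And>t. p \<le> t \<Longrightarrow> (f has_real_derivative f' t) (at t within {p..})"
  shows "continuous_on {p..} f"
  using assms by (auto intro!: continuous_on_eq_continuous_within[THEN iffD2] DERIV_continuous)

locale separatrix_asymptotics =
  fixes v h :: "real \<Rightarrow> real" and \<alpha> \<phi>\<^sub>0 :: real
  assumes alpha_nonneg: "0 \<le> \<alpha>" and alpha_less_1: "\<alpha> < 1"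
    and v_differentiable: "\<And>\<phi>. v differentiable (at \<phi>)"
    and v_pos: "\<And>\<phi>. \<phi>\<^sub>0 < \<phi> \<Longrightarrow> 0 < v \<phi>"
    and log_slope_less_1: "\<And>\<phi>. \<phi>\<^sub>0 < \<phi> \<Longrightarrow> deriv (\<lambda>t. ln (sqrt (v t))) \<phi> < 1"
    and log_slope_tendsto: "(deriv (\<lambda>t. ln (sqrt (v t))) \<longlongrightarrow> \<alpha>) at_top"
    and separatrix: "separatrix v \<phi>\<^sub>0 h"
begin

definition u :: "real \<Rightarrow> real" where "u \<phi> = sqrt (v \<phi>)"

definition e :: "real \<Rightarrow> real" where "e \<phi> = deriv (\<lambda>t. ln (sqrt (v t))) \<phi>"

definition y_star :: real where "y_star = 1 / sqrt (1 - \<alpha>\<^sup>2)"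

lemma sqrt_one_minus_alpha_sq: "0 < sqrt (1 - \<alpha>\<^sup>2)" "sqrt (1 - \<alpha>\<^sup>2) \<le> 1"
  using alpha_nonneg alpha_less_1 by (simp_all add: abs_square_less_1)

lemma v_has_real_derivative: "(v has_real_derivative deriv v t) (at t)"
  using v_differentiable by (simp add: DERIV_deriv_iff_real_differentiable)

lemma continuous_on_v [continuous_intros]:
  assumes "continuous_on S f"
  shows "continuous_on S (\<lambda>z. v (f z))"
proof -
  have "continuous_on UNIV v"
    by (intro continuous_at_imp_continuous_on ballI DERIV_isCont[OF v_has_real_derivative])
  from continuous_on_compose2[OF this assms] show ?thesis by simp
qed

lemma continuous_on_u [continuous_intros]: "continuous_on S f \<Longrightarrow> continuous_on S (\<lambda>z. u (f z))"
  unfolding u_def by (intro continuous_intros)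

lemma v_nonneg: "\<phi>\<^sub>0 \<le> t \<Longrightarrow> 0 \<le> v t"
proof -
  have "isCont v \<phi>\<^sub>0" using v_has_real_derivative by (rule DERIV_isCont)
  then have "(v \<longlongrightarrow> v \<phi>\<^sub>0) (at_right \<phi>\<^sub>0)" by (simp add: isCont_def filterlim_at_split)
  moreover have "\<forall>\<^sub>F t in at_right \<phi>\<^sub>0. 0 \<le> v t"
    using v_pos unfolding eventually_at_right_field by (auto intro!: exI[of _ "\<phi>\<^sub>0 + 1"] less_imp_le)
  ultimately have "0 \<le> v \<phi>\<^sub>0" by (rule tendsto_lowerbound) simp
  then show "\<phi>\<^sub>0 \<le> t \<Longrightarrow> 0 \<le> v t" using v_pos by (cases "t = \<phi>\<^sub>0") (auto intro: less_imp_le)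
qed

lemma u_pos: "\<phi>\<^sub>0 < t \<Longrightarrow> 0 < u t"
  using v_pos by (simp add: u_def)

lemma u_nonneg: "\<phi>\<^sub>0 \<le> t \<Longrightarrow> 0 \<le> u t"
  using v_nonneg by (simp add: u_def)

lemma u_squared: "\<phi>\<^sub>0 \<le> t \<Longrightarrow> (u t)\<^sup>2 = v t"
  using v_nonneg by (simp add: u_def)

lemma e_less_1: "\<phi>\<^sub>0 < t \<Longrightarrow> e t < 1"
  using log_slope_less_1 by (simp add: e_def)

lemma e_close_eventually:
  assumes "0 < \<epsilon>"
  obtains T where "\<phi>\<^sub>0 < T" "\<And>t. T \<le> t \<Longrightarrow> \<bar>e t - \<alpha>\<bar> < \<epsilon>"
proof -
  have "\<forall>\<^sub>F t in at_top. dist (e t) \<alpha> < \<epsilon>"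
    using tendstoD[OF log_slope_tendsto assms] by (simp add: e_def)
  then obtain N where "\<And>t. N \<le> t \<Longrightarrow> \<bar>e t - \<alpha>\<bar> < \<epsilon>"
    by (auto simp: eventually_at_top_linorder dist_real_def)
  then show ?thesis by (intro that[of "max N (\<phi>\<^sub>0 + 1)"]) auto
qed

lemma u_has_real_derivative:
  assumes t: "\<phi>\<^sub>0 < t"
  shows "(u has_real_derivative e t * u t) (at t)"
proof -
  have vt: "0 < v t" using v_pos[OF t] .
  have eq: "inverse (sqrt (v t)) / 2 * deriv v t = deriv v t / (2 * u t)"
    using vt by (simp add: u_def field_simps)
  have du: "(u has_real_derivative deriv v t / (2 * u t)) (at t)"
    using DERIV_chain2[OF DERIV_real_sqrt[OF vt] v_has_real_derivative[of t]]
    unfolding eq unfolding u_def[abs_def] .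
  have "((\<lambda>t. ln (u t)) has_real_derivative inverse (u t) * (deriv v t / (2 * u t))) (at t)"
    by (rule DERIV_chain2[OF DERIV_ln[OF u_pos[OF t]] du])
  then have "((\<lambda>t. ln (sqrt (v t))) has_real_derivative inverse (u t) * (deriv v t / (2 * u t))) (at t)"
    unfolding u_def[abs_def] .
  then have "e t = inverse (u t) * (deriv v t / (2 * u t))" unfolding e_def by (rule DERIV_imp_deriv)
  then have "e t * u t = deriv v t / (2 * u t)" using u_pos[OF t] by (simp add: field_simps)
  then show ?thesis using du by simp
qed

lemma u_le_exp: "\<exists>M\<ge>0. \<forall>t\<ge>\<phi>\<^sub>0. u t \<le> M * exp (t - \<phi>\<^sub>0)"
proof -
  define t1 where "t1 = \<phi>\<^sub>0 + 1"
  have "\<exists>x\<in>{\<phi>\<^sub>0..t1}. \<forall>y\<in>{\<phi>\<^sub>0..t1}. u y \<le> u x"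
    using continuous_on_u[OF continuous_on_id] by (intro continuous_attains_sup) (auto simp: t1_def)
  then obtain U where U: "\<And>t. t \<in> {\<phi>\<^sub>0..t1} \<Longrightarrow> u t \<le> U" by blast
  have U_nonneg: "0 \<le> U" using U[of \<phi>\<^sub>0] u_nonneg[of \<phi>\<^sub>0] by (simp add: t1_def)
  have "u t \<le> U * exp (t - \<phi>\<^sub>0)" if t: "\<phi>\<^sub>0 \<le> t" for t
  proof (cases "t \<le> t1")
    case True
    then have "u t \<le> U" using U t by simp
    also have "\<dots> \<le> U * exp (t - \<phi>\<^sub>0)" using U_nonneg t by (simp add: mult_le_cancel_left1)
    finally show ?thesis .
  next
    case False
    have "ln (u t) - t \<le> ln (u t1) - t1"
    proof (rule DERIV_nonpos_imp_nonincreasing[of t1 t "\<lambda>s. ln (u s) - s"])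
      fix x assume x: "t1 \<le> x" "x \<le> t"
      then have x0: "\<phi>\<^sub>0 < x" by (simp add: t1_def)
      have "((\<lambda>s. ln (u s) - s) has_real_derivative inverse (u x) * (e x * u x) - 1) (at x)"
        by (rule derivative_eq_intros DERIV_chain2[OF DERIV_ln[OF u_pos[OF x0]] u_has_real_derivative[OF x0]]
            | simp)+
      moreover have "inverse (u x) * (e x * u x) - 1 = e x - 1" using u_pos[OF x0] by simp
      ultimately show "\<exists>y. ((\<lambda>s. ln (u s) - s) has_real_derivative y) (at x) \<and> y \<le> 0"
        using e_less_1[OF x0] by auto
    qed (use False in simp)
    then have "exp (ln (u t)) \<le> exp (ln (u t1) + (t - t1))" by simp
    then have "u t \<le> u t1 * exp (t - t1)"
      using u_pos[of t] u_pos[of t1] False by (simp add: t1_def exp_add)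
    also have "\<dots> \<le> U * exp (t - \<phi>\<^sub>0)"
      using U[of t1] U_nonneg by (intro mult_mono) (auto simp: t1_def)
    finally show ?thesis .
  qed
  then show ?thesis using U_nonneg by blast
qed

lemma quotient_u_has_real_derivative:
  assumes t: "\<phi>\<^sub>0 < t" and d: "(g has_real_derivative D) (at t)"
  shows "((\<lambda>t. g t / u t) has_real_derivative (D - g t * e t) / u t) (at t)"
proof -
  have ut: "0 < u t" using u_pos[OF t] .
  have "((\<lambda>t. g t / u t) has_real_derivative (D * u t - g t * (e t * u t)) / (u t * u t)) (at t)"
    using d u_has_real_derivative[OF t] ut by (auto intro!: derivative_eq_intros)
  moreover have "(D * u t - g t * (e t * u t)) / (u t * u t) = (D - g t * e t) / u t"
    using ut by (simp add: field_simps)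
  ultimately show ?thesis by simp
qed

lemma sqrt_sq_minus_v_div_u:
  assumes t: "\<phi>\<^sub>0 < t" and g: "u t \<le> g"
  shows "sqrt (g\<^sup>2 - v t) / u t = sqrt ((g / u t)\<^sup>2 - 1)"
proof -
  have ut: "0 < u t" using u_pos[OF t] .
  have "(g / u t)\<^sup>2 - 1 = (g\<^sup>2 - v t) / (u t)\<^sup>2"
    using ut u_squared[of t] t v_pos[OF t] by (simp add: field_simps)
  then show ?thesis using ut by (simp add: real_sqrt_divide)
qed

lemma ratio_has_real_derivative:
  assumes t: "\<phi>\<^sub>0 < t" and g: "u t \<le> g t"
    and d: "(g has_real_derivative sqrt ((g t)\<^sup>2 - v t)) (at t)"
  shows "((\<lambda>t. g t / u t) has_real_derivative sqrt ((g t / u t)\<^sup>2 - 1) - e t * (g t / u t)) (at t)"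
proof -
  have "(sqrt ((g t)\<^sup>2 - v t) - g t * e t) / u t = sqrt ((g t)\<^sup>2 - v t) / u t - e t * (g t / u t)"
    by (simp add: diff_divide_distrib)
  also have "\<dots> = sqrt ((g t / u t)\<^sup>2 - 1) - e t * (g t / u t)"
    using sqrt_sq_minus_v_div_u[OF t g] by simp
  finally show ?thesis using quotient_u_has_real_derivative[OF t d] by simp
qed

lemma typeB_gt_u: "typeB_solution v \<phi>\<^sub>0 g \<Longrightarrow> \<phi>\<^sub>0 \<le> t \<Longrightarrow> u t < g t"
  unfolding typeB_solution_def u_def by blast

lemma h_typeB: "typeB_solution v \<phi>\<^sub>0 h"
  using separatrix unfolding separatrix_def by blast

lemma h_le_typeB:
  assumes "typeB_solution v \<phi>\<^sub>0 g"
  shows "h \<phi>\<^sub>0 \<le> g \<phi>\<^sub>0"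
proof -
  have "bdd_below {g \<phi>\<^sub>0 | g. typeB_solution v \<phi>\<^sub>0 g}"
  proof (rule bdd_belowI[of _ 0])
    fix x assume "x \<in> {g \<phi>\<^sub>0 | g. typeB_solution v \<phi>\<^sub>0 g}"
    then show "0 \<le> x" using typeB_gt_u[of _ \<phi>\<^sub>0] u_nonneg[of \<phi>\<^sub>0] by fastforce
  qed
  then show ?thesis
    using separatrix assms unfolding separatrix_def by (auto intro: cInf_lower)
qed

lemma h_has_real_derivative:
  "\<phi>\<^sub>0 \<le> t \<Longrightarrow> (h has_real_derivative sqrt ((h t)\<^sup>2 - v t)) (at t within {\<phi>\<^sub>0..})"
  using h_typeB unfolding typeB_solution_def by blast

lemma continuous_on_h: "continuous_on {\<phi>\<^sub>0..} h"
  using h_has_real_derivative by (rule continuous_on_if_has_real_derivative_within_atLeast)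

lemma h_ratio_has_real_derivative:
  "\<phi>\<^sub>0 < t \<Longrightarrow>
    ((\<lambda>t. h t / u t) has_real_derivative sqrt ((h t / u t)\<^sup>2 - 1) - e t * (h t / u t)) (at t)"
  using typeB_gt_u[OF h_typeB] h_has_real_derivative
  by (intro ratio_has_real_derivative has_real_derivative_at_if_within_atLeast) (auto intro: less_imp_le)

lemma h_ratio_gt_1: "\<phi>\<^sub>0 < t \<Longrightarrow> 1 < h t / u t"
  using typeB_gt_u[OF h_typeB, of t] u_pos[of t] by simp

lemma eventually_ratio_gt:
  assumes \<delta>: "0 < \<delta>"
  shows "\<forall>\<^sub>F t in at_top. y_star - \<delta> < h t / u t"
proof (cases "y_star - \<delta> \<le> 1")
  case True
  show ?thesis
  proof (rule eventually_mono[OF eventually_gt_at_top[of \<phi>\<^sub>0]])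
    show "y_star - \<delta> < h t / u t" if "\<phi>\<^sub>0 < t" for t using h_ratio_gt_1[OF that] True by linarith
  qed
next
  case False
  define a where "a = y_star - \<delta>"
  have a: "1 < a" "a < y_star" using False \<delta> by (auto simp: a_def)
  define c where "c = (\<alpha> * a - sqrt (a\<^sup>2 - 1)) / 2"
  have c: "0 < c"
    using sqrt_sq_minus_one_less_mult[OF alpha_nonneg alpha_less_1] a by (simp add: c_def y_star_def)
  obtain T where T: "\<phi>\<^sub>0 < T" "\<And>t. T \<le> t \<Longrightarrow> \<bar>e t - \<alpha>\<bar> < c / a"
    using e_close_eventually[of "c / a"] c a by auto
  have slope: "sqrt (y\<^sup>2 - 1) - e s * y \<le> - c" if s: "T \<le> s" and y: "1 \<le> y" "y \<le> a" for s y
  proof -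
    have "- (c / a) < e s - \<alpha>" using T(2)[OF s] by (simp add: abs_less_iff)
    then have "- (c / a) * a < (e s - \<alpha>) * a" using a by (intro mult_strict_right_mono) auto
    then have close: "- c < (e s - \<alpha>) * a" using a by simp
    have "sqrt (y\<^sup>2 - 1) - e s * y \<le> sqrt (a\<^sup>2 - 1) - e s * a"
      using y e_less_1[of s] s T(1) by (intro sqrt_sq_minus_one_minus_mult_mono) auto
    also have "\<dots> = - 2 * c - (e s - \<alpha>) * a" by (simp add: c_def field_simps)
    also have "\<dots> \<le> - c" using close by linarith
    finally show ?thesis .
  qed
  have "a < h t / u t" if t: "T \<le> t" for t
  proof (rule ccontr)
    assume "\<not> a < h t / u t"
    then have "h (t + a / c) / u (t + a / c) \<le> h t / u t - c * (t + a / c - t)"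
    proof (intro le_linear_decrease_if_deriv_le[of c t "\<lambda>s. h s / u s"
          "\<lambda>s. sqrt ((h s / u s)\<^sup>2 - 1) - e s * (h s / u s)" a])
      fix s assume s: "t \<le> s"
      then show "((\<lambda>s. h s / u s) has_real_derivative sqrt ((h s / u s)\<^sup>2 - 1) - e s * (h s / u s)) (at s)"
        using t T(1) by (intro h_ratio_has_real_derivative) simp
      show "sqrt ((h s / u s)\<^sup>2 - 1) - e s * (h s / u s) \<le> - c" if "h s / u s \<le> a"
        using s t that h_ratio_gt_1[of s] T(1) by (intro slope) auto
    qed (use c a in auto)
    moreover have "0 < a / c" using c a by simp
    then have "1 < h (t + a / c) / u (t + a / c)" using t T(1) by (intro h_ratio_gt_1) simp
    ultimately show False using \<open>\<not> a < h t / u t\<close> c by simp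
  qed
  then show ?thesis unfolding eventually_at_top_linorder a_def by blast
qed

definition trunc_field :: "real \<Rightarrow> real \<Rightarrow> real \<Rightarrow> real" where
  "trunc_field c t x = sqrt ((max x (c * u t))\<^sup>2 - v t)"

lemma trunc_field_eq: "c * u t \<le> x \<Longrightarrow> trunc_field c t x = sqrt (x\<^sup>2 - v t)"
  by (simp add: trunc_field_def max_def)

lemma trunc_field_lipschitz:
  assumes c: "1 < c" and t: "\<phi>\<^sub>0 \<le> t"
  shows "\<bar>trunc_field c t x - trunc_field c t y\<bar> \<le> c / sqrt (c\<^sup>2 - 1) * \<bar>x - y\<bar>"
proof -
  have cu: "0 \<le> c * u t" "(c * u t)\<^sup>2 = c\<^sup>2 * v t"
    using c u_nonneg[OF t] u_squared[OF t] by (simp_all add: power_mult_distrib)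
  have max_bound: "0 \<le> max z (c * u t) \<and> c\<^sup>2 * v t \<le> (max z (c * u t))\<^sup>2" for z
  proof -
    have "(c * u t)\<^sup>2 \<le> (max z (c * u t))\<^sup>2" by (rule power_mono[OF max.cobounded2 cu(1)])
    then show ?thesis using cu by auto
  qed
  have "\<bar>trunc_field c t x - trunc_field c t y\<bar>
      \<le> c / sqrt (c\<^sup>2 - 1) * \<bar>max x (c * u t) - max y (c * u t)\<bar>"
    unfolding trunc_field_def using max_bound[of x] max_bound[of y]
    by (intro abs_sqrt_sq_minus_diff_le c v_nonneg t) auto
  also have "\<dots> \<le> c / sqrt (c\<^sup>2 - 1) * \<bar>x - y\<bar>"
    using c by (intro mult_left_mono) (auto simp: max_def abs_if)
  finally show ?thesis .
qed

lemma trunc_solution_exists: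
  assumes c: "1 < c"
  shows "\<exists>g. g \<phi>\<^sub>0 = \<xi> \<and> (\<forall>t\<ge>\<phi>\<^sub>0. (g has_real_derivative trunc_field c t (g t)) (at t within {\<phi>\<^sub>0..}))"
proof -
  obtain M where M: "0 \<le> M" "\<And>t. \<phi>\<^sub>0 \<le> t \<Longrightarrow> u t \<le> M * exp (t - \<phi>\<^sub>0)"
    using u_le_exp by blast
  interpret lipschitz_ode "trunc_field c" \<phi>\<^sub>0 "c / sqrt (c\<^sup>2 - 1)" "c * M" 1
  proof
    show "continuous_on UNIV (\<lambda>z. trunc_field c (fst z) (snd z))"
      unfolding trunc_field_def by (intro continuous_intros)
    show "\<bar>trunc_field c t x - trunc_field c t y\<bar> \<le> c / sqrt (c\<^sup>2 - 1) * \<bar>x - y\<bar>" if "\<phi>\<^sub>0 \<le> t" for t x y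
      using trunc_field_lipschitz[OF c that] .
    show "0 \<le> c / sqrt (c\<^sup>2 - 1)" using c by simp
    show "\<bar>trunc_field c t 0\<bar> \<le> c * M * exp (1 * (t - \<phi>\<^sub>0))" if t: "\<phi>\<^sub>0 \<le> t" for t
    proof -
      have "1 * (u t)\<^sup>2 \<le> c\<^sup>2 * (u t)\<^sup>2" by (rule mult_right_mono) (use c in \<open>simp_all add: one_le_power\<close>)
      then have "v t \<le> (c * u t)\<^sup>2" using u_squared[OF t] by (simp add: power_mult_distrib)
      then have "\<bar>trunc_field c t 0\<bar> = sqrt ((c * u t)\<^sup>2 - v t)"
        using c u_nonneg[OF t] by (simp add: trunc_field_def)
      also have "\<dots> \<le> sqrt ((c * u t)\<^sup>2)" using v_nonneg[OF t] by (intro real_sqrt_le_mono) simp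
      also have "\<dots> \<le> c * (M * exp (t - \<phi>\<^sub>0))"
        using c u_nonneg[OF t] M(2)[OF t] by simp
      finally show ?thesis by simp
    qed
  qed simp
  show ?thesis by (rule solution_exists)
qed

lemma h_above_scaled_u:
  assumes "\<phi>\<^sub>0 \<le> \<phi>\<^sub>1" "1 < a"
  obtains c m where "1 < c" "c < a" "0 < m" "\<And>t. t \<in> {\<phi>\<^sub>0..\<phi>\<^sub>1} \<Longrightarrow> c * u t + m \<le> h t"
proof -
  have "continuous_on {\<phi>\<^sub>0..\<phi>\<^sub>1} (\<lambda>t. h t - u t)"
    using continuous_on_subset[OF continuous_on_h, of "{\<phi>\<^sub>0..\<phi>\<^sub>1}"]
    by (intro continuous_intros continuous_on_u[OF continuous_on_id]) auto
  then obtain t0 where t0: "t0 \<in> {\<phi>\<^sub>0..\<phi>\<^sub>1}" "\<And>t. t \<in> {\<phi>\<^sub>0..\<phi>\<^sub>1} \<Longrightarrow> h t0 - u t0 \<le> h t - u t"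
    using continuous_attains_inf[of "{\<phi>\<^sub>0..\<phi>\<^sub>1}" "\<lambda>t. h t - u t"] assms(1) by auto
  have "\<exists>x\<in>{\<phi>\<^sub>0..\<phi>\<^sub>1}. \<forall>y\<in>{\<phi>\<^sub>0..\<phi>\<^sub>1}. u y \<le> u x"
    using continuous_on_u[OF continuous_on_id] assms(1) by (intro continuous_attains_sup) auto
  then obtain U where U: "\<And>t. t \<in> {\<phi>\<^sub>0..\<phi>\<^sub>1} \<Longrightarrow> u t \<le> U" by blast
  define m0 where "m0 = h t0 - u t0"
  have m0: "0 < m0" using typeB_gt_u[OF h_typeB, of t0] t0 by (auto simp: m0_def)
  have U_nonneg: "0 \<le> U" using U[of \<phi>\<^sub>0] u_nonneg[of \<phi>\<^sub>0] assms(1) by simp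
  define \<kappa> where "\<kappa> = min (m0 / (2 * (U + 1))) ((a - 1) / 2)"
  have "\<kappa> \<le> (a - 1) / 2" unfolding \<kappa>_def by (rule min.cobounded2)
  then have \<kappa>: "0 < \<kappa>" "1 + \<kappa> < a" using m0 U_nonneg assms(2) by (auto simp: \<kappa>_def)
  have "\<kappa> * U \<le> m0 / (2 * (U + 1)) * U" using U_nonneg by (intro mult_right_mono) (auto simp: \<kappa>_def)
  also have "\<dots> \<le> m0 / 2" using U_nonneg m0 by (simp add: field_simps)
  finally have \<kappa>U: "\<kappa> * U \<le> m0 / 2" .
  show ?thesis
  proof (rule that[of "1 + \<kappa>" "m0 / 2"])
    fix t assume t: "t \<in> {\<phi>\<^sub>0..\<phi>\<^sub>1}"
    have "\<kappa> * u t \<le> \<kappa> * U" using U[OF t] \<kappa> by simp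
    moreover have "m0 \<le> h t - u t" using t0(2)[OF t] by (simp add: m0_def)
    moreover have "(1 + \<kappa>) * u t = u t + \<kappa> * u t" by (simp add: algebra_simps)
    ultimately show "(1 + \<kappa>) * u t + m0 / 2 \<le> h t" using \<kappa>U by linarith
  qed (use \<kappa> m0 in auto)
qed

lemma typeB_if_trunc_solution:
  assumes c: "1 < c" "c < a" and \<phi>\<^sub>1: "\<phi>\<^sub>0 < \<phi>\<^sub>1"
    and g_deriv: "\<And>t. \<phi>\<^sub>0 \<le> t \<Longrightarrow> (g has_real_derivative trunc_field c t (g t)) (at t within {\<phi>\<^sub>0..})"
    and g_above: "\<And>t. t \<in> {\<phi>\<^sub>0..\<phi>\<^sub>1} \<Longrightarrow> c * u t < g t"
    and g_\<phi>\<^sub>1: "a * u \<phi>\<^sub>1 \<le> g \<phi>\<^sub>1"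
    and grow: "\<And>t z. \<phi>\<^sub>1 \<le> t \<Longrightarrow> a \<le> z \<Longrightarrow> 0 < sqrt (z\<^sup>2 - 1) - e t * z"
  shows "typeB_solution v \<phi>\<^sub>0 g"
proof -
  have ratio_ge: "a \<le> g t / u t" if t: "\<phi>\<^sub>1 \<le> t" for t
  proof (rule stays_ge_if_deriv_pos[of \<phi>\<^sub>1 "\<lambda>t. g t / u t" "\<lambda>t. (trunc_field c t (g t) - g t * e t) / u t"])
    fix s assume s: "\<phi>\<^sub>1 \<le> s"
    then have s0: "\<phi>\<^sub>0 < s" using \<phi>\<^sub>1 by simp
    show "((\<lambda>t. g t / u t) has_real_derivative (trunc_field c s (g s) - g s * e s) / u s) (at s)"
      using s0 g_deriv[of s] by (intro quotient_u_has_real_derivative has_real_derivative_at_if_within_atLeast) auto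
    assume "a \<le> g s / u s"
    then have ga: "a * u s \<le> g s" using u_pos[OF s0] by (simp add: pos_le_divide_eq)
    moreover have "c * u s \<le> a * u s" "u s \<le> c * u s" using c u_pos[OF s0] by simp_all
    ultimately have "(trunc_field c s (g s) - g s * e s) / u s = sqrt ((g s / u s)\<^sup>2 - 1) - e s * (g s / u s)"
      using sqrt_sq_minus_v_div_u[OF s0, of "g s"] by (simp add: trunc_field_eq diff_divide_distrib)
    then show "0 < (trunc_field c s (g s) - g s * e s) / u s"
      using grow[OF s \<open>a \<le> g s / u s\<close>] by simp
  qed (use g_\<phi>\<^sub>1 u_pos[OF \<phi>\<^sub>1] t in \<open>simp_all add: pos_le_divide_eq\<close>)
  have above: "c * u t < g t" if "\<phi>\<^sub>0 \<le> t" for t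
  proof (cases "t \<le> \<phi>\<^sub>1")
    case False
    then have "0 < u t" "a * u t \<le> g t"
      using ratio_ge[of t] u_pos[of t] \<phi>\<^sub>1 by (simp_all add: pos_le_divide_eq)
    moreover have "c * u t < a * u t" using c \<open>0 < u t\<close> by simp
    ultimately show ?thesis by linarith
  qed (use g_above that in auto)
  show ?thesis
    unfolding typeB_solution_def
  proof (intro allI impI conjI)
    fix t assume t: "\<phi>\<^sub>0 \<le> t"
    have "u t \<le> c * u t" using mult_right_mono[of 1 c "u t"] c u_nonneg[OF t] by simp
    then show "sqrt (v t) < g t" using above[OF t] by (simp add: u_def)
    show "(g has_real_derivative sqrt ((g t)\<^sup>2 - v t)) (at t within {\<phi>\<^sub>0..})"
      using g_deriv[OF t] above[OF t] by (simp add: trunc_field_eq)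
  qed
qed

lemma trunc_solution_near_h:
  assumes c: "1 < c" and margin: "\<And>s. s \<in> {\<phi>\<^sub>0..t} \<Longrightarrow> c * u s \<le> h s"
    and g_deriv: "\<And>s. \<phi>\<^sub>0 \<le> s \<Longrightarrow> (g has_real_derivative trunc_field c s (g s)) (at s within {\<phi>\<^sub>0..})"
    and t: "\<phi>\<^sub>0 \<le> t"
  shows "\<bar>h t - g t\<bar> \<le> \<bar>h \<phi>\<^sub>0 - g \<phi>\<^sub>0\<bar> * exp (c / sqrt (c\<^sup>2 - 1) * (t - \<phi>\<^sub>0))"
proof (rule abs_diff_solutions_le_exp[where F = "trunc_field c"])
  show "continuous_on {\<phi>\<^sub>0..t} h" "continuous_on {\<phi>\<^sub>0..t} g"
    using continuous_on_h continuous_on_if_has_real_derivative_within_atLeast[OF g_deriv]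
    by (auto elim: continuous_on_subset)
  fix s assume s: "\<phi>\<^sub>0 < s" "s < t"
  then show "(h has_real_derivative trunc_field c s (h s)) (at s)"
    using margin[of s] h_has_real_derivative[of s]
    by (simp add: trunc_field_eq has_real_derivative_at_if_within_atLeast)
  show "(g has_real_derivative trunc_field c s (g s)) (at s)"
    using s g_deriv[of s] by (simp add: has_real_derivative_at_if_within_atLeast)
  show "\<bar>trunc_field c s (h s) - trunc_field c s (g s)\<bar> \<le> c / sqrt (c\<^sup>2 - 1) * \<bar>h s - g s\<bar>"
    using trunc_field_lipschitz[OF c] s by simp
qed (use c t in auto)

lemma h_le_mult_u_if_ratio_grows:
  assumes \<phi>\<^sub>1: "\<phi>\<^sub>0 < \<phi>\<^sub>1" and a: "1 < a"
    and grow: "\<And>t z. \<phi>\<^sub>1 \<le> t \<Longrightarrow> a \<le> z \<Longrightarrow> 0 < sqrt (z\<^sup>2 - 1) - e t * z"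
  shows "h \<phi>\<^sub>1 \<le> a * u \<phi>\<^sub>1"
proof (rule ccontr)
  assume "\<not> h \<phi>\<^sub>1 \<le> a * u \<phi>\<^sub>1"
  obtain c m where c: "1 < c" "c < a" and m: "0 < m"
    and margin: "\<And>t. t \<in> {\<phi>\<^sub>0..\<phi>\<^sub>1} \<Longrightarrow> c * u t + m \<le> h t"
    using h_above_scaled_u[of \<phi>\<^sub>1 a] \<phi>\<^sub>1 a by auto
  define L where "L = c / sqrt (c\<^sup>2 - 1)"
  define \<rho> where "\<rho> = min m (h \<phi>\<^sub>1 - a * u \<phi>\<^sub>1)"
  define \<eta> where "\<eta> = \<rho> / 2 * exp (- L * (\<phi>\<^sub>1 - \<phi>\<^sub>0))"
  have \<rho>: "0 < \<rho>" using m \<open>\<not> h \<phi>\<^sub>1 \<le> a * u \<phi>\<^sub>1\<close> by (simp add: \<rho>_def)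
  have L: "0 \<le> L" using c by (simp add: L_def)
  obtain g where g0: "g \<phi>\<^sub>0 = h \<phi>\<^sub>0 - \<eta>"
    and g_deriv: "\<And>t. \<phi>\<^sub>0 \<le> t \<Longrightarrow> (g has_real_derivative trunc_field c t (g t)) (at t within {\<phi>\<^sub>0..})"
    using trunc_solution_exists[OF c(1)] by blast
  have close: "\<bar>h t - g t\<bar> < \<rho>" if t: "t \<in> {\<phi>\<^sub>0..\<phi>\<^sub>1}" for t
  proof -
    have "\<bar>h t - g t\<bar> \<le> \<bar>h \<phi>\<^sub>0 - g \<phi>\<^sub>0\<bar> * exp (L * (t - \<phi>\<^sub>0))"
      unfolding L_def using margin m t by (intro trunc_solution_near_h[OF c(1) _ g_deriv]) force+
    also have "\<dots> = \<rho> / 2 * exp (L * (t - \<phi>\<^sub>1))"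
      using \<rho> by (simp add: g0 \<eta>_def abs_mult mult.assoc flip: exp_add) (simp add: algebra_simps)
    also have "\<dots> \<le> \<rho> / 2" using \<rho> L t by (simp add: mult_nonneg_nonpos)
    finally show ?thesis using \<rho> by simp
  qed
  have "typeB_solution v \<phi>\<^sub>0 g"
  proof (rule typeB_if_trunc_solution[OF c \<phi>\<^sub>1 g_deriv _ _ grow])
    show "c * u t < g t" if "t \<in> {\<phi>\<^sub>0..\<phi>\<^sub>1}" for t
      using margin[OF that] close[OF that] \<rho>_def by (simp add: abs_less_iff)
    show "a * u \<phi>\<^sub>1 \<le> g \<phi>\<^sub>1" using close[of \<phi>\<^sub>1] \<phi>\<^sub>1 \<rho>_def by (simp add: abs_less_iff)
  qed
  then have "h \<phi>\<^sub>0 \<le> g \<phi>\<^sub>0" by (rule h_le_typeB)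
  moreover have "0 < \<eta>" using \<rho> by (simp add: \<eta>_def)
  ultimately show False using g0 by simp
qed

lemma eventually_ratio_lt:
  assumes \<delta>: "0 < \<delta>"
  shows "\<forall>\<^sub>F t in at_top. h t / u t < y_star + \<delta>"
proof -
  define a where "a = y_star + \<delta> / 2"
  have "1 \<le> y_star" using sqrt_one_minus_alpha_sq by (simp add: y_star_def)
  then have a: "y_star < a" "1 < a" using \<delta> by (auto simp: a_def)
  define c where "c = (sqrt (a\<^sup>2 - 1) - \<alpha> * a) / 2"
  have c: "0 < c"
    using mult_less_sqrt_sq_minus_one[OF alpha_nonneg alpha_less_1] a by (simp add: c_def y_star_def)
  obtain T where T: "\<phi>\<^sub>0 < T" "\<And>t. T \<le> t \<Longrightarrow> \<bar>e t - \<alpha>\<bar> < c / a"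
    using e_close_eventually[of "c / a"] c a by auto
  have grow: "0 < sqrt (z\<^sup>2 - 1) - e s * z" if s: "T \<le> s" and z: "a \<le> z" for s z
  proof -
    have "e s - \<alpha> < c / a" using T(2)[OF s] by (simp add: abs_less_iff)
    then have "(e s - \<alpha>) * a < c / a * a" using a by (intro mult_strict_right_mono) auto
    then have close: "(e s - \<alpha>) * a < c" using a by simp
    have "0 < 2 * c - (e s - \<alpha>) * a" using close c by linarith
    also have "\<dots> = sqrt (a\<^sup>2 - 1) - e s * a" by (simp add: c_def field_simps)
    also have "\<dots> \<le> sqrt (z\<^sup>2 - 1) - e s * z"
      using z a e_less_1[of s] s T(1) by (intro sqrt_sq_minus_one_minus_mult_mono) auto
    finally show ?thesis .
  qed
  have "h t / u t < y_star + \<delta>" if t: "T \<le> t" for t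
  proof -
    have "h t \<le> a * u t" using t T a grow by (intro h_le_mult_u_if_ratio_grows) auto
    then have "h t / u t \<le> a" using u_pos[of t] t T(1) by (simp add: pos_divide_le_eq)
    then show ?thesis using \<delta> by (simp add: a_def)
  qed
  then show ?thesis unfolding eventually_at_top_linorder by blast
qed

lemma ratio_tendsto: "((\<lambda>t. h t / u t) \<longlongrightarrow> y_star) at_top"
proof (rule tendstoI)
  fix \<epsilon> :: real assume "0 < \<epsilon>"
  from eventually_ratio_gt[OF this] eventually_ratio_lt[OF this]
  show "\<forall>\<^sub>F t in at_top. dist (h t / u t) y_star < \<epsilon>"
    by eventually_elim (auto simp: dist_real_def abs_less_iff)
qed

theorem h_asymp_equiv: "h \<sim>[at_top] (\<lambda>\<phi>. sqrt (v \<phi>) / sqrt (1 - \<alpha>\<^sup>2))"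
proof (rule asymp_equivI')
  have "sqrt (1 - \<alpha>\<^sup>2) \<noteq> 0" using sqrt_one_minus_alpha_sq by simp
  then show "((\<lambda>\<phi>. h \<phi> / (sqrt (v \<phi>) / sqrt (1 - \<alpha>\<^sup>2))) \<longlongrightarrow> 1) at_top"
    using tendsto_mult_right[OF ratio_tendsto, of "sqrt (1 - \<alpha>\<^sup>2)"]
    by (simp add: y_star_def u_def)
qed

end

theorem theorem3:
  fixes v h :: "real \<Rightarrow> real" and \<alpha> \<phi>\<^sub>0 :: real
  assumes "0 \<le> \<alpha>" and "\<alpha> < 1"
    and smooth: "\<forall>k x. ((deriv ^^ k) v) differentiable (at x)"
    and pos: "\<forall>\<phi>>\<phi>\<^sub>0. v \<phi> > 0 \<and> deriv v \<phi> > 0"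
    and below1: "\<forall>\<phi>>\<phi>\<^sub>0. deriv (\<lambda>t. ln (sqrt (v t))) \<phi> < 1"
    and lim: "((\<lambda>\<phi>. deriv (\<lambda>t. ln (sqrt (v t))) \<phi>) \<longlongrightarrow> \<alpha>) at_top"
    and sep: "separatrix v \<phi>\<^sub>0 h"
  shows "h \<sim>[at_top] (\<lambda>\<phi>. sqrt (v \<phi>) / sqrt (1 - \<alpha>\<^sup>2))"
proof -
  interpret separatrix_asymptotics v h \<alpha> \<phi>\<^sub>0
  proof
    show "v differentiable (at \<phi>)" for \<phi> using smooth[rule_format, of 0 \<phi>] by simp
  qed (use assms in auto)
  show ?thesis by (rule h_asymp_equiv)
qed

end
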